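(* Let $n,t,t'$ be positive integers with $t-1\ge t'$. Then $$R(\mathcal{C}_{t,t-1,t'},Q_n)=n+t+2.$$
   Context: $C_t$ denotes a chain on $t$ elements. The parallel composition $P_1+P_2+P_3$ of posets is the disjoint union of copies of $P_1,P_2,P_3$ where elements of different copies are incomparable. $\mathcal{C}_{t_1,t_2,t_3}=C_{t_1}+C_{t_2}+C_{t_3}$. $Q_n$ is the Boolean lattice of all subsets of an $n$-element set ordered by inclusion. A copy of $P$ in $Q$ is an induced subposet of $Q$ isomorphic to $P$. $R(P_1,P_2)$ is the smallest integer $N$ such that every blue/red coloring of the elements of $Q_N$ contains an all-blue copy of $P_1$ or an all-red copy of $P_2$. *)

theory Defs
  imports Main
begin

type_synonym 'a poset = "'a set \<times> ('a \<Rightarrow> 'a \<Rightarrow> bool)"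

definition copy_in :: "'a poset \<Rightarrow> nat set set \<Rightarrow> bool" where
  "copy_in P S \<longleftrightarrow> (\<exists>f. inj_on f (fst P) \<and> f ` (fst P) \<subseteq> S \<and>
      (\<forall>x\<in>fst P. \<forall>y\<in>fst P. snd P x y \<longleftrightarrow> f x \<subseteq> f y))"

definition boolean_lattice :: "nat \<Rightarrow> nat set poset" where
  "boolean_lattice n = (Pow {..<n}, (\<subseteq>))"

definition chain_sum3 :: "nat \<Rightarrow> nat \<Rightarrow> nat \<Rightarrow> (nat \<times> nat) poset" where
  "chain_sum3 t1 t2 t3 =
     ({(i, j). (i = 0 \<and> j < t1) \<or> (i = 1 \<and> j < t2) \<or> (i = 2 \<and> j < t3)},
      (\<lambda>(i, j) (i', j'). i = i' \<and> j \<le> j'))"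

text \<open>Poset Ramsey number R(P1,P2): least N such that every blue/red colouring of Q_N
  (blue = c A true) contains a blue copy of P1 or a red copy of P2.\<close>
definition ramsey_num :: "'a poset \<Rightarrow> 'b poset \<Rightarrow> nat" where
  "ramsey_num P1 P2 = (LEAST N. \<forall>c :: nat set \<Rightarrow> bool.
      copy_in P1 {A. A \<subseteq> {..<N} \<and> c A} \<or> copy_in P2 {A. A \<subseteq> {..<N} \<and> \<not> c A})"

end

theory Submission
  imports Defs
begin

text \<open>Upper bound: a blocking argument shows that every colouring of an interval
  \<open>[W, W \<union> [n + k]] \<cong> Q\<^sub>n\<^sub>+\<^sub>k\<close> contains a blue chain of length \<open>k + 1\<close> or a red copy of
  \<open>Q\<^sub>n\<close>. In \<open>Q\<^sub>n\<^sub>+\<^sub>t\<^sub>+\<^sub>2\<close> the intervals above \<open>{m}\<close>, \<open>{m + 1}\<close>, \<open>{m + 2}\<close>, with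
  \<open>m = n + t - 1\<close>, then give three pairwise incomparable blue chains of length \<open>t\<close>.
  Lower bound: colour blue the sets of \<open>Q\<^sub>n\<^sub>+\<^sub>t\<^sub>+\<^sub>1\<close> of size at most 1 or at least
  \<open>n + 2\<close>. The red sets fill only \<open>n\<close> levels, too few for a copy of \<open>Q\<^sub>n\<close>. A blue chain of
  length \<open>t\<close> that avoids the bottom and top of \<open>Q\<^sub>n\<^sub>+\<^sub>t\<^sub>+\<^sub>1\<close> must jump from a singleton
  over all red levels to a co-singleton, and this leaves no room for a second blue chain of
  length \<open>t - 1\<close> and a further blue set, the three pairwise incomparable.\<close>

lemma copy_inI:
  assumes antisym: "\<And>x y. x \<in> fst P \<Longrightarrow> y \<in> fst P \<Longrightarrow> snd P x y \<Longrightarrow> snd P y x \<Longrightarrow> x = y"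
    and into: "\<And>x. x \<in> fst P \<Longrightarrow> f x \<in> S"
    and order: "\<And>x y. x \<in> fst P \<Longrightarrow> y \<in> fst P \<Longrightarrow> snd P x y \<longleftrightarrow> f x \<subseteq> f y"
  shows "copy_in P S"
  unfolding copy_in_def
proof (intro exI conjI)
  show "inj_on f (fst P)"
  proof (rule inj_onI)
    fix x y assume x: "x \<in> fst P" and y: "y \<in> fst P" and "f x = f y"
    then show "x = y" using antisym[OF x y] order[OF x y] order[OF y x] by simp
  qed
  show "f ` fst P \<subseteq> S" using into by blast
  show "\<forall>x\<in>fst P. \<forall>y\<in>fst P. snd P x y \<longleftrightarrow> f x \<subseteq> f y" using order by blast
qed

lemma copy_in_mono:
  assumes "copy_in P S" "S \<subseteq> S'"
  shows "copy_in P S'"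
  using assms unfolding copy_in_def by (meson order_trans)

lemma copy_boolean_latticeI:
  assumes into: "\<And>X. X \<subseteq> {..<n} \<Longrightarrow> \<phi> X \<in> S"
    and mono: "\<And>X Y. X \<subseteq> Y \<Longrightarrow> Y \<subseteq> {..<n} \<Longrightarrow> \<phi> X \<subseteq> \<phi> Y"
    and trace: "\<And>X. X \<subseteq> {..<n} \<Longrightarrow> \<phi> X \<inter> {..<n} = X"
  shows "copy_in (boolean_lattice n) S"
proof (rule copy_inI[where f = \<phi>])
  fix X Y assume "X \<in> fst (boolean_lattice n)" "Y \<in> fst (boolean_lattice n)"
  then have X: "X \<subseteq> {..<n}" and Y: "Y \<subseteq> {..<n}" by (auto simp: boolean_lattice_def)
  have "X \<subseteq> Y \<longleftrightarrow> \<phi> X \<subseteq> \<phi> Y"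
  proof
    assume "\<phi> X \<subseteq> \<phi> Y"
    then have "\<phi> X \<inter> {..<n} \<subseteq> \<phi> Y \<inter> {..<n}" by (rule Int_mono) simp
    then show "X \<subseteq> Y" by (simp only: trace[OF X] trace[OF Y])
  qed (rule mono[OF _ Y])
  then show "snd (boolean_lattice n) X Y \<longleftrightarrow> \<phi> X \<subseteq> \<phi> Y"
    by (simp add: boolean_lattice_def)
  show "\<phi> X \<in> S" using into[OF X] .
next
  show "X = Y" if "snd (boolean_lattice n) X Y" "snd (boolean_lattice n) Y X" for X Y
    using that by (simp add: boolean_lattice_def)
qed

lemma copy_boolean_latticeE:
  assumes "copy_in (boolean_lattice n) S"
  obtains h where "\<And>j. j \<le> n \<Longrightarrow> h j \<in> S" and "\<And>j. j < n \<Longrightarrow> h j \<subset> h (Suc j)"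
proof -
  from assms obtain f where inj: "inj_on f (Pow {..<n})" and into: "f ` Pow {..<n} \<subseteq> S"
    and order: "\<forall>X\<in>Pow {..<n}. \<forall>Y\<in>Pow {..<n}. X \<subseteq> Y \<longleftrightarrow> f X \<subseteq> f Y"
    unfolding copy_in_def boolean_lattice_def by auto
  have initial: "{..<j} \<in> Pow {..<n}" if "j \<le> n" for j
    using that by auto
  show thesis
  proof (rule that[of "\<lambda>j. f {..<j}"])
    show "f {..<j} \<in> S" if "j \<le> n" for j
      using into initial[OF that] by blast
    show "f {..<j} \<subset> f {..<Suc j}" if "j < n" for j
    proof
      have "{..<j} \<subseteq> {..<Suc j}" "{..<j} \<noteq> {..<Suc j}" by auto
      then show "f {..<j} \<subseteq> f {..<Suc j}" "f {..<j} \<noteq> f {..<Suc j}"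
        using order inj_onD[OF inj] initial that by (metis Suc_leI less_imp_le)+
    qed
  qed
qed

lemma copy_chain_sum3I:
  fixes H :: "nat \<Rightarrow> nat \<Rightarrow> nat set"
  assumes "t1 \<le> t" "t2 \<le> t" "t3 \<le> t"
    and into: "\<And>i j. i < 3 \<Longrightarrow> j < t \<Longrightarrow> H i j \<in> S"
    and strict: "\<And>i j j'. i < 3 \<Longrightarrow> j < j' \<Longrightarrow> j' < t \<Longrightarrow> H i j \<subset> H i j'"
    and separated: "\<And>i i' j j'. i < 3 \<Longrightarrow> i' < 3 \<Longrightarrow> j < t \<Longrightarrow> j' < t \<Longrightarrow>
                      H i j \<subseteq> H i' j' \<Longrightarrow> i = i'"
  shows "copy_in (chain_sum3 t1 t2 t3) S"
proof (rule copy_inI[where f = "\<lambda>(i, j). H i j"])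
  have carrier: "i < 3 \<and> j < t" if "(i, j) \<in> fst (chain_sum3 t1 t2 t3)" for i j
    using that assms(1-3) by (auto simp: chain_sum3_def)
  fix x y assume x: "x \<in> fst (chain_sum3 t1 t2 t3)" and y: "y \<in> fst (chain_sum3 t1 t2 t3)"
  obtain i j i' j' where xy: "x = (i, j)" "y = (i', j')" by fastforce
  have ij: "i < 3" "j < t" "i' < 3" "j' < t" using carrier x y xy by auto
  have "H i j \<subseteq> H i' j' \<longleftrightarrow> i = i' \<and> j \<le> j'"
  proof
    assume sub: "H i j \<subseteq> H i' j'"
    have "\<not> j' < j" if "i = i'" using strict[of i j' j] sub ij that by blast
    then show "i = i' \<and> j \<le> j'" using separated[of i i' j j'] sub ij by simp
  next
    assume "i = i' \<and> j \<le> j'"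
    then show "H i j \<subseteq> H i' j'" using strict[of i j j'] ij by (cases "j = j'") auto
  qed
  then show "snd (chain_sum3 t1 t2 t3) x y \<longleftrightarrow> (\<lambda>(i, j). H i j) x \<subseteq> (\<lambda>(i, j). H i j) y"
    by (simp add: xy chain_sum3_def)
  show "(\<lambda>(i, j). H i j) x \<in> S" using into ij xy by simp
next
  show "x = y" if "snd (chain_sum3 t1 t2 t3) x y" "snd (chain_sum3 t1 t2 t3) y x" for x y
    using that by (auto simp: chain_sum3_def)
qed

lemma copy_chain_sum3E:
  assumes "copy_in (chain_sum3 t1 t2 t3) S"
  obtains H where "\<And>i j. (i, j) \<in> fst (chain_sum3 t1 t2 t3) \<Longrightarrow> H i j \<in> S"
    and "\<And>i j i' j'. (i, j) \<in> fst (chain_sum3 t1 t2 t3) \<Longrightarrow> (i', j') \<in> fst (chain_sum3 t1 t2 t3) \<Longrightarrow>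
           H i j \<subseteq> H i' j' \<longleftrightarrow> i = i' \<and> j \<le> j'"
proof -
  let ?C = "fst (chain_sum3 t1 t2 t3)"
  from assms obtain f where into: "f ` ?C \<subseteq> S"
    and order: "\<forall>x\<in>?C. \<forall>y\<in>?C. snd (chain_sum3 t1 t2 t3) x y \<longleftrightarrow> f x \<subseteq> f y"
    unfolding copy_in_def by blast
  have chain_order: "snd (chain_sum3 t1 t2 t3) (i, j) (i', j') \<longleftrightarrow> i = i' \<and> j \<le> j'" for i j i' j'
    by (simp add: chain_sum3_def)
  show thesis
  proof (rule that[of "\<lambda>i j. f (i, j)"])
    show "f (i, j) \<in> S" if "(i, j) \<in> ?C" for i j
      using into that by blast
    show "f (i, j) \<subseteq> f (i', j') \<longleftrightarrow> i = i' \<and> j \<le> j'" if "(i, j) \<in> ?C" "(i', j') \<in> ?C" for i j i' j'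
      using order that chain_order by blast
  qed
qed

lemma card_strict_chain:
  assumes "\<And>j. j < d \<Longrightarrow> h j \<subset> h (Suc j)" and "finite (h d)"
  shows "card (h 0) + d \<le> card (h d)"
  using assms
proof (induction d)
  case 0
  then show ?case by simp
next
  case (Suc d)
  have step: "h d \<subset> h (Suc d)" using Suc.prems(1) by simp
  then have "finite (h d)" using Suc.prems(2) by (meson finite_subset psubset_imp_subset)
  then have "card (h 0) + d \<le> card (h d)" using Suc by simp
  moreover have "card (h d) < card (h (Suc d))"
    using step Suc.prems(2) by (rule psubset_card_mono[rotated])
  ultimately show ?case by simp
qed

lemma eq_lessThan_remove:
  assumes "A \<subseteq> {..<N}" "x < N" "x \<notin> A" "N \<le> card A + 1"
  shows "A = {..<N} - {x}"
  by (rule card_seteq) (use assms in auto)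

definition outer_levels :: "nat \<Rightarrow> nat set \<Rightarrow> bool" where
  "outer_levels n A \<longleftrightarrow> card A \<le> 1 \<or> n + 2 \<le> card A"

lemma no_inner_boolean_lattice:
  "\<not> copy_in (boolean_lattice n) {A. A \<subseteq> {..<N} \<and> \<not> outer_levels n A}"
proof
  assume "copy_in (boolean_lattice n) {A. A \<subseteq> {..<N} \<and> \<not> outer_levels n A}"
  then obtain h where inner: "\<And>j. j \<le> n \<Longrightarrow> h j \<subseteq> {..<N} \<and> \<not> outer_levels n (h j)"
    and strict: "\<And>j. j < n \<Longrightarrow> h j \<subset> h (Suc j)"
    by (rule copy_boolean_latticeE) blast
  have "finite (h n)" using inner[of n] by (meson finite_lessThan finite_subset order_refl)
  with strict have "card (h 0) + n \<le> card (h n)" by (rule card_strict_chain)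
  then show False using inner[of 0] inner[of n] by (simp add: outer_levels_def)
qed

lemma outer_levels_chain_top:
  assumes strict: "\<And>j. j < d \<Longrightarrow> h j \<subset> h (Suc j)"
    and bottom: "outer_levels n (h 0)" "2 \<le> card (h 0)"
    and top: "h d \<subseteq> {..<N}" "h d \<noteq> {..<N}" and N: "N \<le> n + d + 3"
  shows "\<exists>x<N. h d = {..<N} - {x}"
proof -
  obtain x where x: "x < N" "x \<notin> h d" using top by blast
  have "card (h 0) + d \<le> card (h d)"
    using strict finite_subset[OF top(1) finite_lessThan] by (rule card_strict_chain)
  then have "N \<le> card (h d) + 1" using bottom N by (simp add: outer_levels_def)
  then show ?thesis using eq_lessThan_remove[OF top(1) x] x(1) by blast
qed

lemma outer_levels_long_chain:
  assumes h: "\<And>j. j \<le> Suc d \<Longrightarrow> h j \<subseteq> {..<N} \<and> outer_levels n (h j)"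
    and strict: "\<And>j. j < Suc d \<Longrightarrow> h j \<subset> h (Suc j)"
    and "h 0 \<noteq> {}" "h (Suc d) \<noteq> {..<N}" and N: "N \<le> n + d + 3"
  obtains a x where "h 0 = {a}" "x < N" "h (Suc d) = {..<N} - {x}"
proof -
  have fin: "finite (h j)" if "j \<le> Suc d" for j
    using h[OF that] by (meson finite_lessThan finite_subset)
  have "0 < card (h 0)" using \<open>h 0 \<noteq> {}\<close> fin[of 0] by (simp add: card_gt_0_iff)
  then have "2 \<le> card (h 1)" using psubset_card_mono[OF fin strict, of 0] by simp
  then obtain x where x: "x < N" "h (Suc d) = {..<N} - {x}"
    using outer_levels_chain_top[of d "\<lambda>j. h (Suc j)" n N] strict h[of 1] h[of "Suc d"] assms(4) N
    by auto
  have "card (h 0) + Suc d \<le> card (h (Suc d))"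
    using strict fin[OF order_refl] by (rule card_strict_chain)
  then have "card (h 0) \<le> n + 1" using x N by simp
  then have "card (h 0) = 1" using h[of 0] \<open>0 < card (h 0)\<close> by (simp add: outer_levels_def)
  then show thesis using that x by (auto simp: card_1_singleton_iff)
qed

text \<open>The chains \<open>u\<close>, \<open>v\<close> and the point \<open>e\<close> of a blue copy of the chain sum:
  \<open>u\<close> is pinned between a singleton \<open>{a}\<close> and a co-singleton \<open>[N] - {x}\<close> with
  \<open>x \<in> e\<close> and \<open>a \<notin> e\<close>; then \<open>v\<close> starts at \<open>{x}\<close> or ends at \<open>[N] - {a}\<close>,
  and either way it becomes comparable with \<open>e\<close>.\<close>
lemma outer_levels_no_three_chains:
  fixes u v :: "nat \<Rightarrow> nat set"
  assumes N: "N \<le> n + s + 3"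
    and u: "\<And>j. j \<le> Suc s \<Longrightarrow> u j \<subseteq> {..<N} \<and> outer_levels n (u j)"
    and v: "\<And>j. j \<le> s \<Longrightarrow> v j \<subseteq> {..<N} \<and> outer_levels n (v j)"
    and e: "e \<subseteq> {..<N}"
    and u_strict: "\<And>j. j < Suc s \<Longrightarrow> u j \<subset> u (Suc j)"
    and v_strict: "\<And>j. j < s \<Longrightarrow> v j \<subset> v (Suc j)"
    and u_e: "\<not> u 0 \<subseteq> e" and e_u: "\<not> e \<subseteq> u (Suc s)"
    and v_e: "\<not> v 0 \<subseteq> e" and e_v: "\<not> e \<subseteq> v s"
    and v_u: "\<not> v 0 \<subseteq> u (Suc s)" and u_v: "\<not> u 0 \<subseteq> v s"
  shows False
proof -
  have "u 0 \<noteq> {}" "u (Suc s) \<noteq> {..<N}" using u_e e_u e by auto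
  with outer_levels_long_chain[where d = s and h = u, OF u u_strict _ _ N]
  obtain a x where a: "u 0 = {a}" and x: "x < N" "u (Suc s) = {..<N} - {x}"
    by blast
  have "x \<in> e" "a \<notin> e" "a < N" using x e_u e a u_e u[of 0] by auto
  show False
  proof (cases "card (v 0) \<le> 1")
    case True
    have "finite (v 0)" using v[of 0] by (meson finite_lessThan finite_subset le0)
    moreover have "v 0 \<noteq> {}" using v_e by blast
    ultimately have "card (v 0) = 1" using True by (simp add: le_Suc_eq card_gt_0_iff)
    then obtain y where "v 0 = {y}" by (auto simp: card_1_singleton_iff)
    then show False using v_u v_e x \<open>x \<in> e\<close> v[of 0] by auto
  next
    case False
    moreover have "v s \<noteq> {..<N}" using e_v e by blast
    ultimately obtain y where "y < N" "v s = {..<N} - {y}"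
      using outer_levels_chain_top[of s v n N] v_strict v[of 0] v[of s] N by auto
    then show False using u_v e_v a \<open>a \<notin> e\<close> \<open>a < N\<close> e by auto
  qed
qed

lemma no_outer_chain_sum3:
  assumes N: "N \<le> n + t + 1" and t: "2 \<le> t" "1 \<le> t'"
  shows "\<not> copy_in (chain_sum3 t (t - 1) t') {A. A \<subseteq> {..<N} \<and> outer_levels n A}"
proof
  obtain s where s: "t = Suc (Suc s)" using t(1) by (metis add_2_eq_Suc le_Suc_ex)
  let ?C = "fst (chain_sum3 t (t - 1) t')"
  assume "copy_in (chain_sum3 t (t - 1) t') {A. A \<subseteq> {..<N} \<and> outer_levels n A}"
  then obtain H where blue: "\<And>i j. (i, j) \<in> ?C \<Longrightarrow> H i j \<subseteq> {..<N} \<and> outer_levels n (H i j)"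
    and order: "\<And>i j i' j'. (i, j) \<in> ?C \<Longrightarrow> (i', j') \<in> ?C \<Longrightarrow> H i j \<subseteq> H i' j' \<longleftrightarrow> i = i' \<and> j \<le> j'"
    by (rule copy_chain_sum3E) blast
  have C0: "(0, j) \<in> ?C" if "j \<le> Suc s" for j using that s by (simp add: chain_sum3_def)
  have C1: "(1, j) \<in> ?C" if "j \<le> s" for j using that s by (simp add: chain_sum3_def)
  have C2: "(2, 0) \<in> ?C" using t by (simp add: chain_sum3_def)
  show False
  proof (rule outer_levels_no_three_chains[of N n s "H 0" "H 1" "H 2 0"])
    show "N \<le> n + s + 3" using N s by simp
    show "H 0 j \<subseteq> {..<N} \<and> outer_levels n (H 0 j)" if "j \<le> Suc s" for j
      using blue[OF C0[OF that]] .
    show "H 1 j \<subseteq> {..<N} \<and> outer_levels n (H 1 j)" if "j \<le> s" for j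
      using blue[OF C1[OF that]] .
    show "H 2 0 \<subseteq> {..<N}" using blue[OF C2] by simp
    show "H 0 j \<subset> H 0 (Suc j)" if "j < Suc s" for j
      using order[OF C0 C0, of j "Suc j"] order[OF C0 C0, of "Suc j" j] that by auto
    show "H 1 j \<subset> H 1 (Suc j)" if "j < s" for j
      using order[OF C1 C1, of j "Suc j"] order[OF C1 C1, of "Suc j" j] that by auto
  qed (use order[OF C0 C2] order[OF C2 C0] order[OF C1 C2] order[OF C2 C1]
           order[OF C1 C0] order[OF C0 C1] in simp_all)
qed

definition colour_chain :: "('a set \<Rightarrow> bool) \<Rightarrow> 'a set \<Rightarrow> 'a set \<Rightarrow> nat \<Rightarrow> (nat \<Rightarrow> 'a set) \<Rightarrow> bool" where
  "colour_chain c W U m h \<longleftrightarrow>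
     (\<forall>j<m. c (h j) \<and> W \<subseteq> h j \<and> h j \<subseteq> U) \<and> (\<forall>j j'. j < j' \<longrightarrow> j' < m \<longrightarrow> h j \<subset> h j')"

definition max_chain :: "('a set \<Rightarrow> bool) \<Rightarrow> 'a set \<Rightarrow> 'a set \<Rightarrow> nat" where
  "max_chain c W S = Max {m. \<exists>h. colour_chain c W S m h}"

lemma colour_chain_mono:
  assumes "colour_chain c W S m h" "m' \<le> m" "S \<subseteq> S'"
  shows "colour_chain c W S' m' h"
  using assms unfolding colour_chain_def by (meson order_trans less_le_trans)

lemma colour_chain_empty: "colour_chain c W S 0 h"
  by (simp add: colour_chain_def)

lemma colour_chain_singleton: "c S \<Longrightarrow> W \<subseteq> S \<Longrightarrow> colour_chain c W S 1 (\<lambda>_. S)"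
  by (simp add: colour_chain_def)

lemma colour_chain_extend:
  assumes "colour_chain c W S' m h" "c S" "W \<subseteq> S" "S' \<subset> S"
  shows "colour_chain c W S (Suc m) (h(m := S))"
proof -
  have h: "\<And>j. j < m \<Longrightarrow> c (h j) \<and> W \<subseteq> h j \<and> h j \<subseteq> S'"
    "\<And>j j'. j < j' \<Longrightarrow> j' < m \<Longrightarrow> h j \<subset> h j'"
    using assms(1) unfolding colour_chain_def by auto
  show ?thesis
    unfolding colour_chain_def
  proof (rule conjI; intro allI impI)
    show "c ((h(m := S)) j) \<and> W \<subseteq> (h(m := S)) j \<and> (h(m := S)) j \<subseteq> S" if "j < Suc m" for j
      using that h(1)[of j] assms(2-4) by (cases "j = m") auto
    show "(h(m := S)) j \<subset> (h(m := S)) j'" if "j < j'" "j' < Suc m" for j j'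
      using that h(1)[of j] h(2)[of j j'] assms(4) by (cases "j' = m") auto
  qed
qed

locale chain_free =
  fixes c :: "'a set \<Rightarrow> bool" and W U :: "'a set" and k :: nat
  assumes no_long_chain: "\<not> colour_chain c W U (Suc k) h"
begin

lemma colour_chain_length_le:
  assumes "colour_chain c W S m h" "S \<subseteq> U"
  shows "m \<le> k"
proof (rule ccontr)
  assume "\<not> m \<le> k"
  then have "colour_chain c W U (Suc k) h" by (intro colour_chain_mono[OF assms(1) _ assms(2)]) simp
  with no_long_chain show False by blast
qed

lemma finite_chain_lengths:
  assumes "S \<subseteq> U"
  shows "finite {m. \<exists>h. colour_chain c W S m h}"
proof (rule finite_subset)
  show "{m. \<exists>h. colour_chain c W S m h} \<subseteq> {..k}"
  proof
    fix m assume "m \<in> {m. \<exists>h. colour_chain c W S m h}"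
    then obtain h where "colour_chain c W S m h" by blast
    from colour_chain_length_le[OF this assms] show "m \<in> {..k}" by simp
  qed
qed simp

lemma max_chain_attained:
  assumes "S \<subseteq> U"
  shows "\<exists>h. colour_chain c W S (max_chain c W S) h"
proof -
  have "max_chain c W S \<in> {m. \<exists>h. colour_chain c W S m h}"
    unfolding max_chain_def using finite_chain_lengths[OF assms] colour_chain_empty[of c W S]
    by (intro Max_in) blast+
  then show ?thesis by simp
qed

lemma max_chain_greatest:
  assumes "colour_chain c W S m h" "S \<subseteq> U"
  shows "m \<le> max_chain c W S"
  unfolding max_chain_def using assms by (intro Max_ge finite_chain_lengths) blast+

lemma max_chain_le:
  assumes "S \<subseteq> U"
  shows "max_chain c W S \<le> k"
proof -
  obtain h where "colour_chain c W S (max_chain c W S) h"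
    using max_chain_attained[OF assms] by blast
  from colour_chain_length_le[OF this assms] show ?thesis .
qed

lemma max_chain_mono:
  assumes "S \<subseteq> S'" "S' \<subseteq> U"
  shows "max_chain c W S \<le> max_chain c W S'"
proof -
  obtain h where "colour_chain c W S (max_chain c W S) h"
    using max_chain_attained assms by blast
  then have "colour_chain c W S' (max_chain c W S) h"
    using assms(1) by (rule colour_chain_mono[OF _ order_refl])
  then show ?thesis using max_chain_greatest assms(2) by blast
qed

lemma max_chain_strict_mono:
  assumes "c S" "W \<subseteq> S" "S' \<subset> S" "S \<subseteq> U"
  shows "max_chain c W S' < max_chain c W S"
proof -
  obtain h where "colour_chain c W S' (max_chain c W S') h"
    using max_chain_attained assms by blast
  then have "colour_chain c W S (Suc (max_chain c W S')) (h(max_chain c W S' := S))"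
    using assms by (intro colour_chain_extend)
  from max_chain_greatest[OF this assms(4)] show ?thesis by simp
qed

lemma max_chain_pos: "c S \<Longrightarrow> W \<subseteq> S \<Longrightarrow> S \<subseteq> U \<Longrightarrow> 0 < max_chain c W S"
  using max_chain_greatest[OF colour_chain_singleton] by fastforce

end

text \<open>The blocking argument: \<open>X \<subseteq> {..<n}\<close> is lifted to the first level
  \<open>X \<union> W \<union> {n..<n + j}\<close> below which no coloured chain is longer than \<open>j\<close>.
  That set has colour \<open>\<not> c\<close>: otherwise its longest chain would be longer than that of the
  previous level, which by minimality of \<open>j\<close> already exceeds \<open>j - 1\<close>.\<close>
locale red_cube_construction = chain_free c W "W \<union> {..<n + k}" k
  for c :: "nat set \<Rightarrow> bool" and W :: "nat set" and n k :: nat +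
  assumes disjoint: "W \<inter> {..<n + k} = {}"
begin

definition level :: "nat set \<Rightarrow> nat \<Rightarrow> nat set" where
  "level X j = X \<union> W \<union> {n..<n + j}"

definition stop_level :: "nat set \<Rightarrow> nat" where
  "stop_level X = (LEAST j. max_chain c W (level X j) \<le> j)"

lemma level_subset: "X \<subseteq> {..<n} \<Longrightarrow> j \<le> k \<Longrightarrow> level X j \<subseteq> W \<union> {..<n + k}"
  unfolding level_def by auto

lemma level_trace: "X \<subseteq> {..<n} \<Longrightarrow> level X j \<inter> {..<n} = X"
  unfolding level_def using disjoint by auto

lemma stop_level_le:
  assumes "X \<subseteq> {..<n}"
  shows "stop_level X \<le> k"
  unfolding stop_level_def by (rule Least_le, rule max_chain_le, rule level_subset[OF assms order_refl])

lemma max_chain_stop_level: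
  assumes "X \<subseteq> {..<n}"
  shows "max_chain c W (level X (stop_level X)) \<le> stop_level X"
  unfolding stop_level_def
  by (rule LeastI[of _ k], rule max_chain_le, rule level_subset[OF assms order_refl])

lemma stop_level_mono:
  assumes "X \<subseteq> Y" "Y \<subseteq> {..<n}"
  shows "stop_level X \<le> stop_level Y"
proof -
  have "level X (stop_level Y) \<subseteq> level Y (stop_level Y)"
    using assms(1) unfolding level_def by auto
  then have "max_chain c W (level X (stop_level Y)) \<le> max_chain c W (level Y (stop_level Y))"
    using level_subset[OF assms(2) stop_level_le[OF assms(2)]] by (rule max_chain_mono)
  also have "\<dots> \<le> stop_level Y"
    using max_chain_stop_level[OF assms(2)] .
  finally have "max_chain c W (level X (stop_level Y)) \<le> stop_level Y" .
  then show ?thesis unfolding stop_level_def[of X] by (rule Least_le)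
qed

lemma not_colour_stop_level:
  assumes X: "X \<subseteq> {..<n}"
  shows "\<not> c (level X (stop_level X))"
proof
  define i where "i = stop_level X"
  assume coloured: "c (level X i)"
  have W: "W \<subseteq> level X i" unfolding level_def by auto
  have U: "level X i \<subseteq> W \<union> {..<n + k}"
    unfolding i_def using X by (intro level_subset stop_level_le)
  have "0 < i" using max_chain_pos[OF coloured W U] max_chain_stop_level[OF X] i_def by simp
  then have "\<not> max_chain c W (level X (i - 1)) \<le> i - 1"
    unfolding i_def stop_level_def by (intro not_less_Least) simp
  moreover have "level X (i - 1) \<subset> level X i"
  proof -
    have "n + (i - 1) \<notin> W" using disjoint \<open>0 < i\<close> stop_level_le[OF X] i_def by auto
    then have "n + (i - 1) \<in> level X i - level X (i - 1)"
      using \<open>0 < i\<close> X unfolding level_def by auto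
    moreover have "level X (i - 1) \<subseteq> level X i" unfolding level_def by auto
    ultimately show ?thesis by blast
  qed
  then have "max_chain c W (level X (i - 1)) < max_chain c W (level X i)"
    using coloured W U by (intro max_chain_strict_mono)
  ultimately show False using max_chain_stop_level[OF X] i_def by simp
qed

lemma red_cube: "copy_in (boolean_lattice n) {A. A \<subseteq> W \<union> {..<n + k} \<and> \<not> c A}"
proof (rule copy_boolean_latticeI[where \<phi> = "\<lambda>X. level X (stop_level X)"])
  show "level X (stop_level X) \<in> {A. A \<subseteq> W \<union> {..<n + k} \<and> \<not> c A}" if "X \<subseteq> {..<n}" for X
    using level_subset[OF that stop_level_le[OF that]] not_colour_stop_level[OF that] by simp
  show "level X (stop_level X) \<subseteq> level Y (stop_level Y)" if "X \<subseteq> Y" "Y \<subseteq> {..<n}" for X Y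
    using stop_level_mono[OF that] that(1) unfolding level_def by auto
qed (rule level_trace)

end

lemma chain_or_red_cube:
  fixes c :: "nat set \<Rightarrow> bool"
  assumes "W \<inter> {..<n + k} = {}"
  shows "(\<exists>h. colour_chain c W (W \<union> {..<n + k}) (Suc k) h) \<or>
         copy_in (boolean_lattice n) {A. A \<subseteq> W \<union> {..<n + k} \<and> \<not> c A}"
proof (cases "\<exists>h. colour_chain c W (W \<union> {..<n + k}) (Suc k) h")
  case False
  interpret red_cube_construction c W n k
  proof
    show "\<not> colour_chain c W (W \<union> {..<n + k}) (Suc k) h" for h
      using False by blast
  qed (rule assms)
  show ?thesis using red_cube by blast
qed simp

lemma chain_sum3_or_boolean_lattice:
  fixes c :: "nat set \<Rightarrow> bool"
  assumes "1 \<le> t" "t1 \<le> t" "t2 \<le> t" "t3 \<le> t"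
  shows "copy_in (chain_sum3 t1 t2 t3) {A. A \<subseteq> {..<n + t + 2} \<and> c A} \<or>
         copy_in (boolean_lattice n) {A. A \<subseteq> {..<n + t + 2} \<and> \<not> c A}"
proof (rule disjCI)
  assume no_red: "\<not> copy_in (boolean_lattice n) {A. A \<subseteq> {..<n + t + 2} \<and> \<not> c A}"
  define m where "m = n + (t - 1)"
  have layer: "{m + i} \<union> {..<m} \<subseteq> {..<n + t + 2}" if "i < 3" for i
  proof -
    have "m + i < n + t + 2" using that assms(1) unfolding m_def by arith
    then show ?thesis by auto
  qed
  have m: "n + (t - 1) = m" "Suc (t - 1) = t" using assms(1) unfolding m_def by simp_all
  have "\<exists>h. colour_chain c {m + i} ({m + i} \<union> {..<m}) t h" if "i < 3" for i
  proof -
    have "\<not> copy_in (boolean_lattice n) {A. A \<subseteq> {m + i} \<union> {..<m} \<and> \<not> c A}"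
    proof
      assume "copy_in (boolean_lattice n) {A. A \<subseteq> {m + i} \<union> {..<m} \<and> \<not> c A}"
      then have "copy_in (boolean_lattice n) {A. A \<subseteq> {..<n + t + 2} \<and> \<not> c A}"
        by (rule copy_in_mono) (use layer[OF that] in auto)
      with no_red show False by contradiction
    qed
    moreover have "{m + i} \<inter> {..<n + (t - 1)} = {}" unfolding m by simp
    ultimately show ?thesis using chain_or_red_cube[of "{m + i}" n "t - 1" c, unfolded m] by blast
  qed
  then obtain H where H: "\<And>i. i < 3 \<Longrightarrow> colour_chain c {m + i} ({m + i} \<union> {..<m}) t (H i)"
    by metis
  have chain: "c (H i j)" "m + i \<in> H i j" "H i j \<subseteq> {m + i} \<union> {..<m}" if "i < 3" "j < t" for i j
    using H[OF that(1)] that(2) unfolding colour_chain_def by auto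
  show "copy_in (chain_sum3 t1 t2 t3) {A. A \<subseteq> {..<n + t + 2} \<and> c A}"
  proof (rule copy_chain_sum3I[OF assms(2-4)])
    show "H i j \<in> {A. A \<subseteq> {..<n + t + 2} \<and> c A}" if "i < 3" "j < t" for i j
      using chain[OF that] layer[OF that(1)] by auto
    show "H i j \<subset> H i j'" if "i < 3" "j < j'" "j' < t" for i j j'
      using H[OF that(1)] that(2,3) unfolding colour_chain_def by simp
    show "i = i'" if "i < 3" "i' < 3" "j < t" "j' < t" "H i j \<subseteq> H i' j'" for i i' j j'
      using chain(2)[OF that(1,3)] chain(3)[OF that(2,4)] that(5) unfolding m_def by auto
  qed
qed

lemma ramsey_num_eqI:
  assumes "\<And>c. copy_in P1 {A. A \<subseteq> {..<N} \<and> c A} \<or> copy_in P2 {A. A \<subseteq> {..<N} \<and> \<not> c A}"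
    and "\<And>M. M < N \<Longrightarrow>
           \<exists>c. \<not> copy_in P1 {A. A \<subseteq> {..<M} \<and> c A} \<and> \<not> copy_in P2 {A. A \<subseteq> {..<M} \<and> \<not> c A}"
  shows "ramsey_num P1 P2 = N"
  unfolding ramsey_num_def
proof (rule Least_equality)
  show "\<forall>c. copy_in P1 {A. A \<subseteq> {..<N} \<and> c A} \<or> copy_in P2 {A. A \<subseteq> {..<N} \<and> \<not> c A}"
    using assms(1) by blast
  show "N \<le> M"
    if "\<forall>c. copy_in P1 {A. A \<subseteq> {..<M} \<and> c A} \<or> copy_in P2 {A. A \<subseteq> {..<M} \<and> \<not> c A}" for M
    using that assms(2)[of M] by (meson not_le)
qed

theorem theorem6:
  fixes n t t' :: nat
  assumes "n \<ge> 1" and "t \<ge> 1" and "t' \<ge> 1" and "t - 1 \<ge> t'"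
  shows "ramsey_num (chain_sum3 t (t - 1) t') (boolean_lattice n) = n + t + 2"
proof (rule ramsey_num_eqI)
  have t: "2 \<le> t" "t' \<le> t" using assms by linarith+
  show "copy_in (chain_sum3 t (t - 1) t') {A. A \<subseteq> {..<n + t + 2} \<and> c A} \<or>
        copy_in (boolean_lattice n) {A. A \<subseteq> {..<n + t + 2} \<and> \<not> c A}" for c
    using t by (intro chain_sum3_or_boolean_lattice) simp_all
  show "\<exists>c. \<not> copy_in (chain_sum3 t (t - 1) t') {A. A \<subseteq> {..<N} \<and> c A} \<and>
            \<not> copy_in (boolean_lattice n) {A. A \<subseteq> {..<N} \<and> \<not> c A}" if "N < n + t + 2" for N
    using no_outer_chain_sum3[of N n t t'] no_inner_boolean_lattice[of n N] that t assms(3)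
    by (intro exI[of _ "outer_levels n"]) simp
qed

end
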